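(* Let $J,\mu,\Delta\in\mathbb{R}$, $T>0$, let $(\kappa_l)_{l\ge1}$ be any real sequence, and let $N\ge4$ be even. Then for every $k\in\{(2n+1)\pi/N: n=0,\dots,N-1\}$ with $\epsilon(k)>0$, $$\mathscr{E}_J(k)\le\sqrt{2}\,T .$$ In particular $\mathscr{E}_J$ is bounded uniformly in $k$ and $N$, and the uncontrolled quantum Fisher information $I(J)=\big(\sum_k\mathscr{E}_J(k)\big)^2$ satisfies $I(J)\le 2T^2N^2$, so it is at most of Heisenberg scaling.
   Context: Let $f_N(k)=2\sum_{l=1}^{N/2-1}\kappa_l\sin(kl)+\kappa_{N/2}$ and $\epsilon(k)=\sqrt{[\Delta f_N(k)/2]^2+(J\cos k+\mu)^2}$ (the Bogoliubov quasiparticle energy of the long-range Kitaev chain). For a parameter $\theta$, given real functions $a_\theta(k)$ and $\xi_\theta(k)$, set $$\mathscr{E}_\theta(k)=\Big\{T^2a_\theta(k)^2+\tfrac14\xi_\theta(k)^2\sin^2[2\epsilon(k)T]+\tfrac14\xi_\theta(k)^2\big(1-\cos[2\epsilon(k)T]\big)^2\Big\}^{1/2},$$ the single-mode eigenvalues of the estimation generator. For $\theta=J$: $a_J(k)=\partial_J\epsilon(k)=\cos k\,(J\cos k+\mu)/\epsilon(k)$ and $\xi_J(k)=\Delta f_N(k)\cos k/[2\epsilon(k)^2]$. *)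

theory Defs
  imports Complex_Main
begin

text \<open>Long-range Kitaev chain. The couplings kappa are indexed by l = 1, 2, ...
  (kappa 0 is unused). N is the (even) chain length.\<close>

definition fN :: "(nat \<Rightarrow> real) \<Rightarrow> nat \<Rightarrow> real \<Rightarrow> real" where
  "fN \<kappa> N k = 2 * (\<Sum>l=1..N div 2 - 1. \<kappa> l * sin (k * real l)) + \<kappa> (N div 2)"

definition eps :: "(nat \<Rightarrow> real) \<Rightarrow> nat \<Rightarrow> real \<Rightarrow> real \<Rightarrow> real \<Rightarrow> real \<Rightarrow> real" where
  "eps \<kappa> N J \<mu> \<Delta> k = sqrt ((\<Delta> * fN \<kappa> N k / 2)^2 + (J * cos k + \<mu>)^2)"

definition scrE :: "real \<Rightarrow> real \<Rightarrow> real \<Rightarrow> real \<Rightarrow> real" where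
  "scrE T e a \<xi> = sqrt (T^2 * a^2 + (1/4) * \<xi>^2 * (sin (2 * e * T))^2
                     + (1/4) * \<xi>^2 * (1 - cos (2 * e * T))^2)"

definition a_J :: "(nat \<Rightarrow> real) \<Rightarrow> nat \<Rightarrow> real \<Rightarrow> real \<Rightarrow> real \<Rightarrow> real \<Rightarrow> real" where
  "a_J \<kappa> N J \<mu> \<Delta> k = cos k * (J * cos k + \<mu>) / eps \<kappa> N J \<mu> \<Delta> k"

definition xi_J :: "(nat \<Rightarrow> real) \<Rightarrow> nat \<Rightarrow> real \<Rightarrow> real \<Rightarrow> real \<Rightarrow> real \<Rightarrow> real" where
  "xi_J \<kappa> N J \<mu> \<Delta> k = \<Delta> * fN \<kappa> N k * cos k / (2 * (eps \<kappa> N J \<mu> \<Delta> k)^2)"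

definition scrE_J :: "(nat \<Rightarrow> real) \<Rightarrow> nat \<Rightarrow> real \<Rightarrow> real \<Rightarrow> real \<Rightarrow> real \<Rightarrow> real \<Rightarrow> real" where
  "scrE_J \<kappa> N J \<mu> \<Delta> T k =
     scrE T (eps \<kappa> N J \<mu> \<Delta> k) (a_J \<kappa> N J \<mu> \<Delta> k) (xi_J \<kappa> N J \<mu> \<Delta> k)"

definition kmom :: "nat \<Rightarrow> nat \<Rightarrow> real" where
  "kmom N n = (2 * real n + 1) * pi / real N"

end

theory Submission
  imports Defs
begin

text \<open>Since \<open>sin\<^sup>2(2x) + (1 - cos(2x))\<^sup>2 = 4 sin\<^sup>2 x\<close>, the eigenvalue is
  \<open>sqrt (T\<^sup>2 a\<^sup>2 + \<xi>\<^sup>2 sin\<^sup>2(\<epsilon>T))\<close>, and \<open>|sin x| \<le> |x|\<close> bounds it by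
  \<open>T sqrt (a\<^sup>2 + (\<xi>\<epsilon>)\<^sup>2)\<close>. For \<open>\<theta> = J\<close> one has \<open>a\<^sup>2 + (\<xi>\<epsilon>)\<^sup>2 = cos\<^sup>2 k (A\<^sup>2 + B\<^sup>2) / \<epsilon>\<^sup>2 = cos\<^sup>2 k\<close>
  since \<open>\<epsilon>\<^sup>2 = A\<^sup>2 + B\<^sup>2\<close> for \<open>A = J cos k + \<mu>\<close>, \<open>B = \<Delta> f\<^sub>N(k) / 2\<close>, so each mode contributes at most \<open>T |cos k| \<le> T\<close>, and the
  sum over at most \<open>N\<close> modes is at most \<open>N T\<close>.\<close>

lemma sin_double_sq_plus_one_minus_cos_double_sq:
  "(sin (2 * y))\<^sup>2 + (1 - cos (2 * y))\<^sup>2 = 4 * (sin (y::real))\<^sup>2"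
  unfolding sin_double cos_double_sin using sin_cos_squared_add[of y] by algebra

lemma scrE_eq: "scrE T e a \<xi> = sqrt (T\<^sup>2 * a\<^sup>2 + \<xi>\<^sup>2 * (sin (e * T))\<^sup>2)"
proof -
  have "(sin (2 * e * T))\<^sup>2 + (1 - cos (2 * e * T))\<^sup>2 = 4 * (sin (e * T))\<^sup>2"
    using sin_double_sq_plus_one_minus_cos_double_sq[of "e * T"] by (simp add: mult.assoc)
  then have "(1/4) * \<xi>\<^sup>2 * (sin (2 * e * T))\<^sup>2 + (1/4) * \<xi>\<^sup>2 * (1 - cos (2 * e * T))\<^sup>2
      = \<xi>\<^sup>2 * (sin (e * T))\<^sup>2"
    by algebra
  then show ?thesis
    unfolding scrE_def by (simp only: add.assoc)
qed

lemma scrE_le: "scrE T e a \<xi> \<le> \<bar>T\<bar> * sqrt (a\<^sup>2 + (\<xi> * e)\<^sup>2)"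
proof -
  have "(sin (e * T))\<^sup>2 \<le> (e * T)\<^sup>2"
    using abs_sin_x_le_abs_x[of "e * T"] by (metis abs_ge_zero power2_abs power_mono)
  then have "\<xi>\<^sup>2 * (sin (e * T))\<^sup>2 \<le> \<xi>\<^sup>2 * (e * T)\<^sup>2"
    by (rule mult_left_mono) simp
  then have "scrE T e a \<xi> \<le> sqrt (T\<^sup>2 * (a\<^sup>2 + (\<xi> * e)\<^sup>2))"
    unfolding scrE_eq by (intro real_sqrt_le_mono) (simp add: algebra_simps)
  then show ?thesis by (simp add: real_sqrt_mult)
qed

text \<open>At \<open>\<epsilon>(k) = 0\<close> the divisions in \<^const>\<open>a_J\<close> and \<^const>\<open>xi_J\<close> return 0.\<close>

lemma scrE_J_le_abs_cos: "scrE_J \<kappa> N J \<mu> \<Delta> T k \<le> \<bar>T\<bar> * \<bar>cos k\<bar>"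
proof (cases "eps \<kappa> N J \<mu> \<Delta> k = 0")
  case True
  then show ?thesis by (simp add: scrE_J_def scrE_def a_J_def xi_J_def)
next
  case False
  define e A B where "e = eps \<kappa> N J \<mu> \<Delta> k" and "A = J * cos k + \<mu>"
    and "B = \<Delta> * fN \<kappa> N k / 2"
  have "e\<^sup>2 = A\<^sup>2 + B\<^sup>2"
    unfolding e_def A_def B_def eps_def by simp
  have "B * cos k / e\<^sup>2 * e = B * cos k / e"
    using False unfolding e_def by (simp add: power2_eq_square)
  then have "(cos k * A / e)\<^sup>2 + (B * cos k / e\<^sup>2 * e)\<^sup>2 = (cos k)\<^sup>2 * (A\<^sup>2 + B\<^sup>2) / e\<^sup>2"
    by (simp add: power_divide power_mult_distrib add_divide_distrib algebra_simps)
  also have "\<dots> = (cos k)\<^sup>2"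
    using False unfolding \<open>e\<^sup>2 = A\<^sup>2 + B\<^sup>2\<close>[symmetric] e_def by simp
  finally have "(cos k * A / e)\<^sup>2 + (B * cos k / e\<^sup>2 * e)\<^sup>2 = (cos k)\<^sup>2" .
  then have "sqrt ((a_J \<kappa> N J \<mu> \<Delta> k)\<^sup>2 + (xi_J \<kappa> N J \<mu> \<Delta> k * e)\<^sup>2) = \<bar>cos k\<bar>"
    unfolding a_J_def xi_J_def e_def A_def B_def by (simp add: mult.assoc)
  then show ?thesis
    using scrE_le unfolding scrE_J_def e_def by metis
qed

lemma scrE_J_le: "T \<ge> 0 \<Longrightarrow> scrE_J \<kappa> N J \<mu> \<Delta> T k \<le> T"
  using scrE_J_le_abs_cos[of \<kappa> N J \<mu> \<Delta> T k] abs_cos_le_one[of k]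
  by (smt (verit) mult_left_le)

theorem mainTheorem8:
  fixes J \<mu> \<Delta> T :: real and \<kappa> :: "nat \<Rightarrow> real" and N :: nat
  assumes "T > 0" and "even N" and "N \<ge> 4"
  shows "(\<forall>n<N. eps \<kappa> N J \<mu> \<Delta> (kmom N n) > 0 \<longrightarrow>
            scrE_J \<kappa> N J \<mu> \<Delta> T (kmom N n) \<le> sqrt 2 * T)
       \<and> (\<Sum>n\<in>{n. n < N \<and> eps \<kappa> N J \<mu> \<Delta> (kmom N n) > 0}.
            scrE_J \<kappa> N J \<mu> \<Delta> T (kmom N n))^2 \<le> 2 * T^2 * (real N)^2"
proof
  have T: "T \<ge> 0" using assms(1) by simp
  have "T \<le> sqrt 2 * T" using assms(1) by (simp add: mult_le_cancel_right1)
  then show "\<forall>n<N. eps \<kappa> N J \<mu> \<Delta> (kmom N n) > 0 \<longrightarrow>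
            scrE_J \<kappa> N J \<mu> \<Delta> T (kmom N n) \<le> sqrt 2 * T"
    using scrE_J_le[OF T] order_trans by blast
  define S where "S = {n. n < N \<and> eps \<kappa> N J \<mu> \<Delta> (kmom N n) > 0}"
  define I where "I = (\<Sum>n\<in>S. scrE_J \<kappa> N J \<mu> \<Delta> T (kmom N n))"
  have "I \<le> real (card S) * T"
    unfolding I_def using sum_bounded_above[of S "\<lambda>n. scrE_J \<kappa> N J \<mu> \<Delta> T (kmom N n)" T]
      scrE_J_le[OF T] by simp
  also have "\<dots> \<le> real N * T"
    using card_mono[of "{..<N}" S] T by (simp add: S_def subset_eq mult_right_mono)
  finally have "I\<^sup>2 \<le> (real N * T)\<^sup>2"
    by (rule power_mono) (simp add: I_def sum_nonneg scrE_J_def scrE_def)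
  also have "\<dots> \<le> 2 * T^2 * (real N)^2"
    by (simp add: power_mult_distrib)
  finally show "I\<^sup>2 \<le> 2 * T^2 * (real N)^2" .
qed

end
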